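(* Let $\mathcal{X}\subseteq\mathbb{R}^d$ be a nonempty compact convex set and let $f:\mathbb{R}^d\to\mathbb{R}$ be Lipschitz continuous and Clarke regular (for all $x,v$ the limit $f'(x;v)=\lim_{t\downarrow0}\frac{f(x+tv)-f(x)}{t}$ exists). Fix $\lambda>0$ and let $r(\lambda)\ge0$, where $r:(0,\infty)\to[0,\infty)$ is a function with $r(\lambda)\to0$ as $\lambda\to0$ such that $\nabla f_\lambda(x)\in\partial f(x)+B(0,r(\lambda))$ for all $x\in\mathcal{X}$, with $f_\lambda(x)=\mathbb{E}_{u\sim\mathcal{N}(0,I)}[f(x+\lambda u)]$. For $(x,y)\in\mathcal{X}\times\mathbb{R}^d$ define $$\hat{\mathcal{N}}_{\mathcal{X}}(x)=\{\eta\in\mathcal{N}_{\mathcal{X}}(x):\ \|\eta\|\le 2\|y\|\},\qquad H_1(x,y)=-\big(y+\hat{\mathcal{N}}_{\mathcal{X}}(x)\big),\qquad H_2(x,y)=-\big(y-\partial f(x)\big)+B(0,r(\lambda)).$$ Then $H_1$ and $H_2$ are Marchaud maps on $\mathcal{X}\times\mathbb{R}^d$.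
   Context: $\mathcal{N}_{\mathcal{X}}(x)$ is the normal cone of the convex set $\mathcal{X}$ at $x\in\mathcal{X}$; note $\hat{\mathcal{N}}_{\mathcal{X}}(x)$ depends on $y$ as well. $\partial f(x)$ is the Clarke subdifferential of $f$ at $x$ ($\overline{\mathrm{conv}}$ of limits of gradients $\nabla f(x_k)$ along sequences $x_k\to x$ of differentiability points). $B(0,\rho)$ is the closed ball of radius $\rho$ about $0$; set sums are Minkowski sums, so $-(y-\partial f(x))=\{-y+g: g\in\partial f(x)\}$. A set-valued map $H$ defined on pairs $(x,y)$ is Marchaud if: (a) each $H(x,y)$ is nonempty, convex and compact; (b) there is $K>0$ with $\sup_{z\in H(x,y)}\|z\|\le K(1+\|x\|+\|y\|)$ for all $(x,y)$; (c) it is upper semicontinuous in the sense that whenever $(x_n,y_n)\to(x,y)$, $z_n\in H(x_n,y_n)$ and $z_n\to z$, then $z\in H(x,y)$. *)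

theory Defs
  imports "HOL-Analysis.Analysis"
begin

definition has_grad :: "('a::euclidean_space \<Rightarrow> real) \<Rightarrow> 'a \<Rightarrow> 'a \<Rightarrow> bool" where
  "has_grad f g x \<longleftrightarrow> (f has_derivative (\<lambda>h. g \<bullet> h)) (at x)"

definition clarke_subdiff :: "('a::euclidean_space \<Rightarrow> real) \<Rightarrow> 'a \<Rightarrow> 'a set" where
  "clarke_subdiff f x = closure (convex hull
     {g. \<exists>xs gs. (xs \<longlonglongrightarrow> x) \<and> (\<forall>k. has_grad f (gs k) (xs k)) \<and> (gs \<longlonglongrightarrow> g)})"

definition clarke_regular :: "('a::euclidean_space \<Rightarrow> real) \<Rightarrow> bool" where
  "clarke_regular f \<longleftrightarrow>
     (\<forall>x v. \<exists>l. ((\<lambda>t. (f (x + t *\<^sub>R v) - f x) / t) \<longlongrightarrow> l) (at_right 0))"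

definition normal_cone :: "'a::euclidean_space set \<Rightarrow> 'a \<Rightarrow> 'a set" where
  "normal_cone X x = {\<eta>. \<forall>z\<in>X. \<eta> \<bullet> (z - x) \<le> 0}"

definition std_gaussian :: "'a::euclidean_space measure" where
  "std_gaussian = density lborel
     (\<lambda>u. ennreal ((2 * pi) powr (- real DIM('a) / 2) * exp (- (norm u)\<^sup>2 / 2)))"

definition gauss_smooth :: "('a::euclidean_space \<Rightarrow> real) \<Rightarrow> real \<Rightarrow> 'a \<Rightarrow> real" where
  "gauss_smooth f lam x = integral\<^sup>L std_gaussian (\<lambda>u. f (x + lam *\<^sub>R u))"

definition marchaud :: "('a::euclidean_space \<times> 'a) set \<Rightarrow> ('a \<Rightarrow> 'a \<Rightarrow> 'a set) \<Rightarrow> bool" where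
  "marchaud S H \<longleftrightarrow>
     (\<forall>(x, y)\<in>S. H x y \<noteq> {} \<and> convex (H x y) \<and> compact (H x y)) \<and>
     (\<exists>K>0. \<forall>(x, y)\<in>S. \<forall>z\<in>H x y. norm z \<le> K * (1 + norm x + norm y)) \<and>
     (\<forall>xs ys zs x y z. (\<forall>n. (xs n, ys n) \<in> S \<and> zs n \<in> H (xs n) (ys n)) \<and>
        (xs \<longlonglongrightarrow> x) \<and> (ys \<longlonglongrightarrow> y) \<and> (zs \<longlonglongrightarrow> z) \<and> (x, y) \<in> S
        \<longrightarrow> z \<in> H x y)"

end

theory Submission
  imports Defs
begin

(* For H1 everything is elementary: normal cones are closed and convex, their graph is
   closed, and the truncation at radius 2|y| gives compact values and linear growth.
   For H2, the Clarke subdifferential of an L-Lipschitz f lies in the ball of radius L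
   because every gradient does, which gives compact values and growth. The real point is
   that its graph is closed: if g is not in the subdifferential at x, separate it by a
   hyperplane; since gradients are bounded, Bolzano-Weierstrass shows that all gradients
   at points near x lie beyond a slightly shifted hyperplane, hence so does the whole
   subdifferential at points near x, and g cannot be a limit of its elements.
   Nonemptiness of the subdifferential (Rademacher's theorem in the paper) is read off
   the smoothing hypothesis. *)

lemma has_grad_norm_le_lipschitz:
  fixes f :: "'a::euclidean_space \<Rightarrow> real"
  assumes L: "L-lipschitz_on UNIV f" and g: "has_grad f g x"
  shows "norm g \<le> L"
proof -
  have "((\<lambda>t. x + t *\<^sub>R g) has_derivative (\<lambda>t. t *\<^sub>R g)) (at 0)"
    by (auto intro!: derivative_eq_intros)
  moreover have "(f has_derivative (\<lambda>h. g \<bullet> h)) (at (x + 0 *\<^sub>R g))"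
    using g by (simp add: has_grad_def)
  ultimately have "((\<lambda>t. f (x + t *\<^sub>R g)) has_derivative (\<lambda>t. g \<bullet> (t *\<^sub>R g))) (at 0)"
    by (rule has_derivative_compose)
  then have "((\<lambda>t. f (x + t *\<^sub>R g)) has_real_derivative g \<bullet> g) (at 0)"
    unfolding has_field_derivative_def by (rule has_derivative_eq_rhs) (auto simp: fun_eq_iff)
  then have "((\<lambda>t. \<bar>(f (x + t *\<^sub>R g) - f x) / t\<bar>) \<longlongrightarrow> \<bar>g \<bullet> g\<bar>) (at 0)"
    by (intro tendsto_rabs) (simp add: DERIV_def)
  moreover have "\<bar>(f (x + t *\<^sub>R g) - f x) / t\<bar> \<le> L * norm g" if "t \<noteq> 0" for t
  proof -
    have "\<bar>f (x + t *\<^sub>R g) - f x\<bar> \<le> L * (\<bar>t\<bar> * norm g)"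
      using lipschitz_on_normD[OF L, of "x + t *\<^sub>R g" x] by simp
    with that show ?thesis by (simp add: divide_le_eq mult_ac)
  qed
  ultimately have "norm g * norm g \<le> L * norm g"
    by (intro tendsto_upperbound[where F="at 0"])
       (auto simp: eventually_at_filter dot_square_norm power2_eq_square)
  then show ?thesis
    using lipschitz_on_nonneg[OF L] by (cases "g = 0") (auto simp: mult_le_cancel_right)
qed

definition limiting_gradients :: "('a::euclidean_space \<Rightarrow> real) \<Rightarrow> 'a \<Rightarrow> 'a set" where
  "limiting_gradients f x =
     {g. \<exists>xs gs. (xs \<longlonglongrightarrow> x) \<and> (\<forall>k. has_grad f (gs k) (xs k)) \<and> (gs \<longlonglongrightarrow> g)}"

lemma clarke_subdiff_limiting_gradients:
  "clarke_subdiff f x = closure (convex hull limiting_gradients f x)"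
  by (simp add: clarke_subdiff_def limiting_gradients_def)

lemma convex_clarke_subdiff: "convex (clarke_subdiff f x)"
  by (simp add: clarke_subdiff_limiting_gradients convex_closure)

lemma closed_clarke_subdiff: "closed (clarke_subdiff f x)"
  by (simp add: clarke_subdiff_limiting_gradients)

lemma limiting_gradients_subset_clarke_subdiff:
  "limiting_gradients f x \<subseteq> clarke_subdiff f x"
  unfolding clarke_subdiff_limiting_gradients by (rule order_trans[OF hull_subset closure_subset])

lemma clarke_subdiff_subset:
  assumes "closed C" "convex C" "limiting_gradients f x \<subseteq> C"
  shows "clarke_subdiff f x \<subseteq> C"
  unfolding clarke_subdiff_limiting_gradients
  using assms by (intro closure_minimal hull_minimal)

lemma limiting_gradients_subset:
  assumes "closed C" "open U" "x \<in> U" and grad: "\<And>u g. u \<in> U \<Longrightarrow> has_grad f g u \<Longrightarrow> g \<in> C"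
  shows "limiting_gradients f x \<subseteq> C"
proof
  fix s assume "s \<in> limiting_gradients f x"
  then obtain xs gs where xs: "xs \<longlonglongrightarrow> x" and gs: "\<And>k. has_grad f (gs k) (xs k)" "gs \<longlonglongrightarrow> s"
    by (auto simp: limiting_gradients_def)
  have "eventually (\<lambda>k. xs k \<in> U) sequentially"
    using xs \<open>open U\<close> \<open>x \<in> U\<close> by (rule topological_tendstoD)
  then have "eventually (\<lambda>k. gs k \<in> C) sequentially"
    by eventually_elim (use grad gs(1) in blast)
  then show "s \<in> C"
    using \<open>closed C\<close> gs(2) by (intro Lim_in_closed_set) auto
qed

lemma clarke_subdiff_subset_cball:
  fixes f :: "'a::euclidean_space \<Rightarrow> real"
  assumes L: "L-lipschitz_on UNIV f"
  shows "clarke_subdiff f x \<subseteq> cball 0 L"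
  using has_grad_norm_le_lipschitz[OF L]
  by (intro clarke_subdiff_subset limiting_gradients_subset[where U=UNIV]) auto

lemma compact_clarke_subdiff:
  fixes f :: "'a::euclidean_space \<Rightarrow> real"
  assumes "L-lipschitz_on UNIV f"
  shows "compact (clarke_subdiff f x)"
  using clarke_subdiff_subset_cball[OF assms] closed_clarke_subdiff
  by (meson bounded_cball bounded_subset compact_eq_bounded_closed)

lemma gradients_near_limiting_gradients:
  fixes f :: "'a::euclidean_space \<Rightarrow> real"
  assumes L: "L-lipschitz_on UNIV f" and "open V" "limiting_gradients f x \<subseteq> V"
  shows "\<exists>\<delta>>0. \<forall>u g. dist u x < \<delta> \<longrightarrow> has_grad f g u \<longrightarrow> g \<in> V"
proof (rule ccontr)
  assume "\<not> ?thesis"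
  then have "\<forall>k. \<exists>u g. dist u x < inverse (Suc k) \<and> has_grad f g u \<and> g \<notin> V"
    by (metis of_nat_0_less_iff positive_imp_inverse_positive zero_less_Suc)
  then obtain us gs where us: "\<And>k. dist (us k) x < inverse (Suc k)"
    and gs: "\<And>k. has_grad f (gs k) (us k)" "\<And>k. gs k \<notin> V"
    by metis
  have "(\<lambda>k. dist (us k) x) \<longlonglongrightarrow> 0"
    by (rule tendsto_sandwich[OF always_eventually always_eventually
          tendsto_const LIMSEQ_inverse_real_of_nat])
       (use us in \<open>auto intro: less_imp_le\<close>)
  then have "us \<longlonglongrightarrow> x"
    by (rule tendsto_dist_iff[THEN iffD2])
  have "range gs \<subseteq> cball 0 L"
    using has_grad_norm_le_lipschitz[OF L gs(1)] by auto
  then obtain l r where r: "strict_mono r" and l: "(gs \<circ> r) \<longlonglongrightarrow> l"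
    using compact_cball[THEN compact_imp_seq_compact] by (metis seq_compactE rangeI subsetD)
  have "l \<in> limiting_gradients f x"
    unfolding limiting_gradients_def
  proof (intro CollectI exI conjI allI)
    show "(us \<circ> r) \<longlonglongrightarrow> x" by (rule LIMSEQ_subseq_LIMSEQ[OF \<open>us \<longlonglongrightarrow> x\<close> r])
    show "(gs \<circ> r) \<longlonglongrightarrow> l" by (rule l)
    show "has_grad f ((gs \<circ> r) k) ((us \<circ> r) k)" for k using gs(1) by simp
  qed
  moreover have "l \<in> - V"
    using \<open>open V\<close> gs(2) l by (intro Lim_in_closed_set[where f="gs \<circ> r"]) auto
  ultimately show False
    using assms(3) by blast
qed

lemma clarke_subdiff_closed_graph:
  fixes f :: "'a::euclidean_space \<Rightarrow> real"
  assumes L: "L-lipschitz_on UNIV f"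
    and xs: "xs \<longlonglongrightarrow> x" and gs: "\<And>n. gs n \<in> clarke_subdiff f (xs n)" "gs \<longlonglongrightarrow> g"
  shows "g \<in> clarke_subdiff f x"
proof (rule ccontr)
  assume "g \<notin> clarke_subdiff f x"
  then obtain a b where ab: "a \<bullet> g < b" "\<forall>c\<in>clarke_subdiff f x. b < a \<bullet> c"
    using separating_hyperplane_closed_point[OF convex_clarke_subdiff closed_clarke_subdiff]
    by blast
  define m where "m = (a \<bullet> g + b) / 2"
  have "limiting_gradients f x \<subseteq> {c. m < a \<bullet> c}"
    using ab limiting_gradients_subset_clarke_subdiff by (force simp: m_def)
  then obtain \<delta> where "\<delta> > 0" and \<delta>: "\<And>u h. dist u x < \<delta> \<Longrightarrow> has_grad f h u \<Longrightarrow> m < a \<bullet> h"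
    using gradients_near_limiting_gradients[OF L open_halfspace_gt] by blast
  have "eventually (\<lambda>n. xs n \<in> ball x \<delta>) sequentially"
    using xs \<open>\<delta> > 0\<close> by (intro topological_tendstoD) auto
  then have "eventually (\<lambda>n. gs n \<in> {c. m \<le> a \<bullet> c}) sequentially"
  proof eventually_elim
    case (elim n)
    have "limiting_gradients f (xs n) \<subseteq> {c. m \<le> a \<bullet> c}"
    proof (rule limiting_gradients_subset[OF closed_halfspace_ge open_ball elim])
      fix u h assume "u \<in> ball x \<delta>" "has_grad f h u"
      then show "h \<in> {c. m \<le> a \<bullet> c}"
        using \<delta>[of u h] by (simp add: dist_commute)
    qed
    then have "clarke_subdiff f (xs n) \<subseteq> {c. m \<le> a \<bullet> c}"
      by (intro clarke_subdiff_subset closed_halfspace_ge convex_halfspace_ge)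
    then show ?case using gs(1) by blast
  qed
  then have "m \<le> a \<bullet> g"
    using gs(2) by (intro Lim_in_closed_set[OF closed_halfspace_ge, simplified]) auto
  then show False
    using ab(1) by (simp add: m_def)
qed

lemma clarke_subdiff_plus_cball_closed_graph:
  fixes f :: "'a::euclidean_space \<Rightarrow> real"
  assumes L: "L-lipschitz_on UNIV f" and xs: "xs \<longlonglongrightarrow> x"
    and ws: "\<And>n. ws n \<in> {g + b | g b. g \<in> clarke_subdiff f (xs n) \<and> b \<in> cball 0 \<rho>}" "ws \<longlonglongrightarrow> w"
  shows "w \<in> {g + b | g b. g \<in> clarke_subdiff f x \<and> b \<in> cball 0 \<rho>}"
proof -
  have "\<forall>n. \<exists>g. g \<in> clarke_subdiff f (xs n) \<and> ws n - g \<in> cball 0 \<rho>"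
    using ws(1) by fastforce
  then obtain gs where gs: "\<And>n. gs n \<in> clarke_subdiff f (xs n)" "\<And>n. ws n - gs n \<in> cball 0 \<rho>"
    by metis
  have "range gs \<subseteq> cball 0 L"
    using gs(1) clarke_subdiff_subset_cball[OF L] by blast
  then obtain g r where r: "strict_mono r" and g: "(gs \<circ> r) \<longlonglongrightarrow> g"
    using compact_cball[THEN compact_imp_seq_compact] by (metis seq_compactE rangeI subsetD)
  have "g \<in> clarke_subdiff f x"
    using gs(1) by (intro clarke_subdiff_closed_graph[OF L LIMSEQ_subseq_LIMSEQ[OF xs r] _ g]) simp
  moreover have "w - g \<in> cball 0 \<rho>"
  proof (rule Lim_in_closed_set[OF closed_cball])
    show "((\<lambda>n. ws (r n) - gs (r n)) \<longlonglongrightarrow> w - g)"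
      using LIMSEQ_subseq_LIMSEQ[OF ws(2) r] g by (intro tendsto_diff) (simp_all add: o_def)
  qed (use gs(2) in auto)
  ultimately show ?thesis
    by (intro CollectI exI[of _ g] exI[of _ "w - g"]) simp
qed

lemma normal_cone_closed_graph:
  assumes "xs \<longlonglongrightarrow> x" "\<eta>s \<longlonglongrightarrow> \<eta>" "\<And>n. \<eta>s n \<in> normal_cone X (xs n)"
  shows "\<eta> \<in> normal_cone X x"
  unfolding normal_cone_def
proof (intro CollectI ballI)
  fix z assume "z \<in> X"
  have "(\<lambda>n. \<eta>s n \<bullet> (z - xs n)) \<longlonglongrightarrow> \<eta> \<bullet> (z - x)"
    using assms(1,2) by (intro tendsto_intros)
  then show "\<eta> \<bullet> (z - x) \<le> 0"
    using assms(3) \<open>z \<in> X\<close> by (intro LIMSEQ_le_const2) (auto simp: normal_cone_def)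
qed

lemma closed_normal_cone: "closed (normal_cone X x)"
  using normal_cone_closed_graph[of "\<lambda>_. x" x] by (auto simp: closed_sequential_limits)

lemma convex_normal_cone: "convex (normal_cone X x)"
proof -
  have "normal_cone X x = (\<Inter>z\<in>X. {\<eta>. (z - x) \<bullet> \<eta> \<le> 0})"
    by (auto simp: normal_cone_def inner_commute)
  then show ?thesis
    by (simp add: convex_INT convex_halfspace_le)
qed

lemma marchaudI:
  assumes "\<And>x y. (x, y) \<in> S \<Longrightarrow> H x y \<noteq> {} \<and> convex (H x y) \<and> compact (H x y)"
    and "K > 0" "\<And>x y z. (x, y) \<in> S \<Longrightarrow> z \<in> H x y \<Longrightarrow> norm z \<le> K * (1 + norm x + norm y)"
    and "\<And>xs ys zs x y z. (\<And>n. (xs n, ys n) \<in> S) \<Longrightarrow> (\<And>n. zs n \<in> H (xs n) (ys n)) \<Longrightarrow>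
           xs \<longlonglongrightarrow> x \<Longrightarrow> ys \<longlonglongrightarrow> y \<Longrightarrow> zs \<longlonglongrightarrow> z \<Longrightarrow> (x, y) \<in> S \<Longrightarrow> z \<in> H x y"
  shows "marchaud S H"
  unfolding marchaud_def using assms by blast

lemma marchaud_normal_cone_map:
  "marchaud (X \<times> UNIV)
     (\<lambda>x y. {- (y + \<eta>) | \<eta>. \<eta> \<in> normal_cone X x \<and> norm \<eta> \<le> 2 * norm y})"
proof (rule marchaudI[where K=3])
  fix x y :: 'a
  let ?N = "normal_cone X x \<inter> cball 0 (2 * norm y)"
  have "{- (y + \<eta>) | \<eta>. \<eta> \<in> normal_cone X x \<and> norm \<eta> \<le> 2 * norm y}
      = (\<lambda>\<eta>. - y + (- 1) *\<^sub>R \<eta>) ` ?N"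
    by auto
  moreover have "0 \<in> ?N"
    by (simp add: normal_cone_def)
  moreover have "compact ?N" "convex ?N"
    by (simp_all add: closed_normal_cone closed_Int_compact convex_normal_cone convex_Int)
  ultimately show "{- (y + \<eta>) | \<eta>. \<eta> \<in> normal_cone X x \<and> norm \<eta> \<le> 2 * norm y} \<noteq> {} \<and>
      convex {- (y + \<eta>) | \<eta>. \<eta> \<in> normal_cone X x \<and> norm \<eta> \<le> 2 * norm y} \<and>
      compact {- (y + \<eta>) | \<eta>. \<eta> \<in> normal_cone X x \<and> norm \<eta> \<le> 2 * norm y}"
    by (auto simp only: compact_affinity convex_affinity image_is_empty)
next
  fix x y z :: 'a
  assume "z \<in> {- (y + \<eta>) | \<eta>. \<eta> \<in> normal_cone X x \<and> norm \<eta> \<le> 2 * norm y}"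
  then obtain \<eta> where z: "z = - (y + \<eta>)" and \<eta>: "norm \<eta> \<le> 2 * norm y"
    by blast
  have "norm z \<le> norm y + norm \<eta>"
    unfolding z norm_minus_cancel by (rule norm_triangle_ineq)
  then show "norm z \<le> 3 * (1 + norm x + norm y)"
    using \<eta> norm_ge_zero[of x] by (smt (verit))
next
  fix xs ys zs :: "nat \<Rightarrow> 'a" and x y z
  assume zs: "\<And>n. zs n \<in> {- (ys n + \<eta>) | \<eta>. \<eta> \<in> normal_cone X (xs n) \<and> norm \<eta> \<le> 2 * norm (ys n)}"
    and lim: "xs \<longlonglongrightarrow> x" "ys \<longlonglongrightarrow> y" "zs \<longlonglongrightarrow> z"
  have \<eta>s: "- zs n - ys n \<in> normal_cone X (xs n)" "norm (- zs n - ys n) \<le> 2 * norm (ys n)" for n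
    using zs[of n] by auto
  have \<eta>: "(\<lambda>n. - zs n - ys n) \<longlonglongrightarrow> - z - y"
    using lim by (intro tendsto_intros)
  have "- z - y \<in> normal_cone X x"
    using \<eta>s(1) by (rule normal_cone_closed_graph[OF lim(1) \<eta>])
  moreover have "norm (- z - y) \<le> 2 * norm y"
    using \<eta>s(2) by (intro LIMSEQ_le[OF tendsto_norm[OF \<eta>] tendsto_mult[OF tendsto_const tendsto_norm[OF lim(2)]]]) auto
  ultimately show "z \<in> {- (y + \<eta>) | \<eta>. \<eta> \<in> normal_cone X x \<and> norm \<eta> \<le> 2 * norm y}"
    by (intro CollectI exI[of _ "- z - y"]) simp
qed simp

lemma marchaud_clarke_subdiff_map:
  fixes f :: "'a::euclidean_space \<Rightarrow> real"
  assumes L: "L-lipschitz_on UNIV f" and "0 \<le> \<rho>"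
    and nonempty: "\<And>x. x \<in> X \<Longrightarrow> clarke_subdiff f x \<noteq> {}"
  shows "marchaud (X \<times> UNIV)
           (\<lambda>x y. {- (y - g) + b | g b. g \<in> clarke_subdiff f x \<and> b \<in> cball 0 \<rho>})"
proof (rule marchaudI[where K="L + \<rho> + 1"])
  fix x y :: 'a
  assume "(x, y) \<in> X \<times> UNIV"
  let ?G = "{g + b | g b. g \<in> clarke_subdiff f x \<and> b \<in> cball 0 \<rho>}"
  have "{- (y - g) + b | g b. g \<in> clarke_subdiff f x \<and> b \<in> cball 0 \<rho>} = (\<lambda>v. v - y) ` ?G"
    by force
  moreover obtain g where "g \<in> clarke_subdiff f x"
    using nonempty \<open>(x, y) \<in> X \<times> UNIV\<close> by blast
  then have "g + 0 \<in> ?G"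
    using \<open>0 \<le> \<rho>\<close> by (intro CollectI exI[of _ g] exI[of _ 0]) simp
  then have "?G \<noteq> {}"
    by blast
  moreover have "compact ?G"
    by (intro compact_sums compact_clarke_subdiff[OF L] compact_cball)
  moreover have "?G = (\<Union>g\<in>clarke_subdiff f x. \<Union>b\<in>cball 0 \<rho>. {g + b})"
    by blast
  then have "convex ?G"
    by (simp add: convex_sums convex_clarke_subdiff)
  ultimately show "{- (y - g) + b | g b. g \<in> clarke_subdiff f x \<and> b \<in> cball 0 \<rho>} \<noteq> {} \<and>
      convex {- (y - g) + b | g b. g \<in> clarke_subdiff f x \<and> b \<in> cball 0 \<rho>} \<and>
      compact {- (y - g) + b | g b. g \<in> clarke_subdiff f x \<and> b \<in> cball 0 \<rho>}"
    by (simp add: compact_translation_subtract convex_translation_subtract)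
next
  show "L + \<rho> + 1 > 0"
    using lipschitz_on_nonneg[OF L] \<open>0 \<le> \<rho>\<close> by simp
next
  fix x y z :: 'a
  assume "z \<in> {- (y - g) + b | g b. g \<in> clarke_subdiff f x \<and> b \<in> cball 0 \<rho>}"
  then obtain g b where z: "z = - (y - g) + b" and "g \<in> clarke_subdiff f x" "norm b \<le> \<rho>"
    by auto
  have "norm g \<le> L"
    using clarke_subdiff_subset_cball[OF L, of x] \<open>g \<in> clarke_subdiff f x\<close> by auto
  then have "norm z \<le> norm y + L + \<rho>"
    using z \<open>norm b \<le> \<rho>\<close> norm_triangle_ineq[of "g - y" b] norm_triangle_ineq4[of g y] by simp
  also have "\<dots> \<le> (L + \<rho> + 1) * (1 + norm x + norm y)"
    using lipschitz_on_nonneg[OF L] \<open>0 \<le> \<rho>\<close> by (simp add: algebra_simps add_increasing)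
  finally show "norm z \<le> (L + \<rho> + 1) * (1 + norm x + norm y)" .
next
  fix xs ys zs :: "nat \<Rightarrow> 'a" and x y z
  assume zs: "\<And>n. zs n \<in> {- (ys n - g) + b | g b. g \<in> clarke_subdiff f (xs n) \<and> b \<in> cball 0 \<rho>}"
    and lim: "xs \<longlonglongrightarrow> x" "ys \<longlonglongrightarrow> y" "zs \<longlonglongrightarrow> z"
  have "zs n + ys n \<in> {g + b | g b. g \<in> clarke_subdiff f (xs n) \<and> b \<in> cball 0 \<rho>}" for n
    using zs[of n] by (auto simp: algebra_simps)
  then have "z + y \<in> {g + b | g b. g \<in> clarke_subdiff f x \<and> b \<in> cball 0 \<rho>}"
    by (rule clarke_subdiff_plus_cball_closed_graph[OF L lim(1) _ tendsto_add[OF lim(3,2)]])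
  then show "z \<in> {- (y - g) + b | g b. g \<in> clarke_subdiff f x \<and> b \<in> cball 0 \<rho>}"
    by (auto simp: algebra_simps)
qed

theorem lemma2:
  fixes X :: "'a::euclidean_space set" and f :: "'a \<Rightarrow> real"
    and r :: "real \<Rightarrow> real" and lam :: real
  assumes "X \<noteq> {}" and "compact X" and "convex X"
    and "\<exists>L. L-lipschitz_on UNIV f"
    and "clarke_regular f"
    and "\<forall>\<mu>>0. r \<mu> \<ge> 0"
    and "(r \<longlongrightarrow> 0) (at_right 0)"
    and "\<forall>\<mu>>0. \<forall>x\<in>X. \<exists>g. has_grad (gauss_smooth f \<mu>) g x \<and>
            g \<in> {a + b | a b. a \<in> clarke_subdiff f x \<and> b \<in> cball 0 (r \<mu>)}"
    and "lam > 0"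
  shows "marchaud (X \<times> UNIV)
           (\<lambda>x y. {- (y + \<eta>) | \<eta>. \<eta> \<in> normal_cone X x \<and> norm \<eta> \<le> 2 * norm y})
       \<and> marchaud (X \<times> UNIV)
           (\<lambda>x y. {- (y - g) + b | g b. g \<in> clarke_subdiff f x \<and> b \<in> cball 0 (r lam)})"
proof -
  obtain L where L: "L-lipschitz_on UNIV f"
    using assms(4) by blast
  have "clarke_subdiff f x \<noteq> {}" if "x \<in> X" for x
    using assms(8,9) that by blast
  moreover have "0 \<le> r lam"
    using assms(6,9) by blast
  ultimately show ?thesis
    using marchaud_normal_cone_map marchaud_clarke_subdiff_map[OF L] by blast
qed

end
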